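(* Let $c\in\mathbb{C}(t)\setminus\{0,1,t\}$ and $F_n$, $P_1$, $d$ as in the context. For every sufficiently small $\epsilon>0$ there exist $\delta>0$ and an integer $N>0$ such that $$\frac{1}{\deg F_n}\log\|F_n(1,t)\|-\frac{\log|P_1(1,0)|}{d}>-\epsilon$$ for all $t\in\mathbb{C}$ with $|t|<\delta$ and all $n\ge N$.
   Context: $F_{t_1,t_2}(z,w)=\big((t_1w^2-t_2z^2)^2,\;4t_2zw(w-z)(t_1w-t_2z)\big)$. $C=(c_1,c_2)$ is a pair of coprime homogeneous polynomials in $(t_1,t_2)$ of equal degree with $c(t)=c_1(t,1)/c_2(t,1)$. $F_1=F_{t_1,t_2}(C)/\gcd(F_{t_1,t_2}(C))=(P_1,Q_1)$, $d=\deg F_1$, $F_{n+1}=F_{t_1,t_2}(F_n)/t_2^2$, so $\deg F_n=4^{n-1}d$. $\|(z,w)\|=\max\{|z|,|w|\}$. *)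

theory Defs
  imports "HOL-Analysis.Analysis" "HOL-Computational_Algebra.Computational_Algebra" "HOL-Computational_Algebra.Field_as_Ring"
begin

text \<open>Bivariate polynomials in (t1,t2) over the complex numbers are represented as
  polynomials in t2 whose coefficients are polynomials in t1, i.e. C[t1][t2].\<close>

type_synonym bipoly = "complex poly poly"

definition T1 :: bipoly where "T1 = [:[:0, 1:]:]"
definition T2 :: bipoly where "T2 = [:0, 1:]"

definition eval2 :: "bipoly \<Rightarrow> complex \<Rightarrow> complex \<Rightarrow> complex" where
  "eval2 H x y = poly (map_poly (\<lambda>q. poly q x) H) y"

text \<open>H is homogeneous of total degree D (the monomial t1^j t2^k has coefficient coeff (coeff H k) j).\<close>
definition homogeneous :: "nat \<Rightarrow> bipoly \<Rightarrow> bool" where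
  "homogeneous D H \<longleftrightarrow> (\<forall>j k. coeff (coeff H k) j \<noteq> 0 \<longrightarrow> j + k = D)"

definition totdeg :: "bipoly \<Rightarrow> nat" where
  "totdeg H = Max (insert 0 {j + k | j k. coeff (coeff H k) j \<noteq> 0})"

definition pdeg :: "bipoly \<times> bipoly \<Rightarrow> nat" where
  "pdeg F = max (totdeg (fst F)) (totdeg (snd F))"

definition Fmap :: "bipoly \<times> bipoly \<Rightarrow> bipoly \<times> bipoly" where
  "Fmap zw = (case zw of (z, w) \<Rightarrow>
     ((T1 * w^2 - T2 * z^2)^2, 4 * T2 * z * w * (w - z) * (T1 * w - T2 * z)))"

definition F1 :: "bipoly \<times> bipoly \<Rightarrow> bipoly \<times> bipoly" where
  "F1 C = (case Fmap C of (P, Q) \<Rightarrow> (P div gcd P Q, Q div gcd P Q))"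

definition Fstep :: "bipoly \<times> bipoly \<Rightarrow> bipoly \<times> bipoly" where
  "Fstep F = (case Fmap F of (P, Q) \<Rightarrow> (P div T2^2, Q div T2^2))"

text \<open>Fseq C n = F_n for n \<ge> 1 (F_1 = F1 C).\<close>
definition Fseq :: "bipoly \<times> bipoly \<Rightarrow> nat \<Rightarrow> bipoly \<times> bipoly" where
  "Fseq C n = (Fstep ^^ (n - 1)) (F1 C)"

definition pnorm :: "complex \<times> complex \<Rightarrow> real" where
  "pnorm zw = max (cmod (fst zw)) (cmod (snd zw))"

definition evalpair :: "bipoly \<times> bipoly \<Rightarrow> complex \<Rightarrow> complex \<Rightarrow> complex \<times> complex" where
  "evalpair F x y = (eval2 (fst F) x y, eval2 (snd F) x y)"

definition dehom :: "bipoly \<Rightarrow> complex poly" where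
  "dehom H = poly H 1"

end

theory Submission
  imports Defs
begin

text \<open>Along \<open>t2 = 0\<close> the iteration degenerates: \<open>t2\<close> divides the second coordinate of every
  \<open>F_n\<close>, and writing \<open>F_n = (P, t2 R)\<close> one step is
  \<open>F_(n+1) = ((t1 t2 R^2 - P^2)^2, t2 \<cdot> 4 P R (t2 R - P)(t1 R - P))\<close>. Homogeneity and coprimality of
  \<open>C\<close> give \<open>P_1(1,0) \<noteq> 0\<close>, hence the first coordinate of \<open>F_n(1,0)\<close> is \<open>P_1(1,0)^(4^(n-1)) \<noteq> 0\<close>.
  For \<open>|t| \<le> 1/8\<close> one step satisfies \<open>\<parallel>F_(n+1)(1,t)\<parallel> \<ge> \<parallel>F_n(1,t)\<parallel>^4 / 4\<close>, so
  \<open>ln \<parallel>F_n(1,t)\<parallel> / 4^n\<close> can decrease by at most \<open>ln 4 / 4^K\<close> after step \<open>K\<close>; choosing \<open>K\<close> large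
  and then \<open>t\<close> close to \<open>0\<close> (continuity of \<open>F_K(1,t)\<close>) gives the bound. The degrees multiply by
  exactly \<open>4\<close>: after the substitution \<open>t1 \<mapsto> t1 t2\<close>, which turns total degree into degree in
  \<open>t2\<close>, the leading coefficient of \<open>t1 q^2 - \<pi>^2\<close> cannot vanish since \<open>t1\<close> is not a square.\<close>

lemma map_poly_add_hom:
  assumes "f 0 = 0" "\<And>a b. f (a + b) = f a + f b"
  shows "map_poly f (p + q) = map_poly f p + map_poly f q"
  by (intro poly_eqI) (simp add: coeff_map_poly assms)

lemma map_poly_diff_hom:
  fixes f :: "'a::comm_ring_1 \<Rightarrow> 'b::comm_ring_1"
  assumes "f 0 = 0" "\<And>a b. f (a - b) = f a - f b"
  shows "map_poly f (p - q) = map_poly f p - map_poly f q"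
  by (intro poly_eqI) (simp add: coeff_map_poly assms)

lemma map_poly_mult_hom:
  fixes f :: "'a::comm_ring_1 \<Rightarrow> 'b::comm_ring_1"
  assumes f0: "f 0 = 0" and add: "\<And>a b. f (a + b) = f a + f b"
    and mult: "\<And>a b. f (a * b) = f a * f b"
  shows "map_poly f (p * q) = map_poly f p * map_poly f q"
proof (induction p)
  case (pCons a p)
  have "map_poly f (pCons a p * q) = map_poly f (smult a q) + map_poly f (pCons 0 (p * q))"
    by (simp add: map_poly_add_hom[OF f0 add])
  also have "\<dots> = map_poly f (pCons a p) * map_poly f q"
    by (simp add: map_poly_smult[OF f0 mult] map_poly_pCons f0 pCons.IH)
  finally show ?case .
qed simp

lemma map_poly_const: "f 0 = 0 \<Longrightarrow> map_poly f [:c:] = [:f c:]"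
  by (simp add: map_poly_pCons)

lemma eval2_add: "eval2 (A + B) x y = eval2 A x y + eval2 B x y"
  unfolding eval2_def by (simp add: map_poly_add_hom)

lemma eval2_diff: "eval2 (A - B) x y = eval2 A x y - eval2 B x y"
  unfolding eval2_def by (simp add: map_poly_diff_hom)

lemma eval2_mult: "eval2 (A * B) x y = eval2 A x y * eval2 B x y"
  unfolding eval2_def by (simp add: map_poly_mult_hom)

lemma eval2_const: "eval2 [:c:] x y = poly c x"
  unfolding eval2_def by (simp add: map_poly_const)

lemma eval2_one: "eval2 1 x y = 1"
  using eval2_const[of 1 x y] by (simp add: one_pCons)

lemma eval2_power: "eval2 (A ^ n) x y = eval2 A x y ^ n"
  by (induction n) (simp_all add: eval2_one eval2_mult)

lemma eval2_numeral: "eval2 (numeral n) x y = numeral n"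
  by (simp add: numeral_poly eval2_const)

lemma eval2_T1: "eval2 T1 x y = x"
  unfolding T1_def by (simp add: eval2_const)

lemma eval2_T2: "eval2 T2 x y = y"
  unfolding T2_def eval2_def by (simp add: map_poly_pCons)

lemmas eval2_simps =
  eval2_add eval2_diff eval2_mult eval2_power eval2_numeral eval2_T1 eval2_T2 eval2_one

lemma eval2_at_0: "eval2 H x 0 = poly (coeff H 0) x"
  unfolding eval2_def by (simp add: poly_0_coeff_0 coeff_map_poly)

lemma isCont_eval2: "isCont (eval2 H x) y"
  unfolding eval2_def by simp

subsection \<open>The shear substitution\<close>

text \<open>\<open>shear H\<close> is \<open>H(t1 t2, t2)\<close>; it sends the monomial \<open>t1^j t2^k\<close> to \<open>t1^j t2^(j+k)\<close>,
  so its degree in \<open>t2\<close> is the total degree of \<open>H\<close>.\<close>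

definition shear_coeff :: "complex poly \<Rightarrow> bipoly" where
  "shear_coeff q = poly (map_poly (\<lambda>a. [:[:a:]:]) q) (T1 * T2)"

definition shear :: "bipoly \<Rightarrow> bipoly" where
  "shear H = poly (map_poly shear_coeff H) T2"

lemma shear_coeff_0: "shear_coeff 0 = 0"
  by (simp add: shear_coeff_def)

lemma shear_coeff_add: "shear_coeff (a + b) = shear_coeff a + shear_coeff b"
  unfolding shear_coeff_def by (simp add: map_poly_add_hom)

lemma shear_coeff_diff: "shear_coeff (a - b) = shear_coeff a - shear_coeff b"
  unfolding shear_coeff_def by (simp add: map_poly_diff_hom)

lemma shear_coeff_mult: "shear_coeff (a * b) = shear_coeff a * shear_coeff b"
  unfolding shear_coeff_def by (simp add: map_poly_mult_hom)

lemma shear_coeff_const: "shear_coeff [:c:] = [:[:c:]:]"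
  unfolding shear_coeff_def by (simp add: map_poly_const)

lemma shear_coeff_pCons: "shear_coeff (pCons c q) = [:[:c:]:] + T1 * T2 * shear_coeff q"
  unfolding shear_coeff_def by (simp add: map_poly_pCons)

lemma shear_add: "shear (A + B) = shear A + shear B"
  unfolding shear_def by (simp add: map_poly_add_hom shear_coeff_0 shear_coeff_add)

lemma shear_diff: "shear (A - B) = shear A - shear B"
  unfolding shear_def by (simp add: map_poly_diff_hom shear_coeff_0 shear_coeff_diff)

lemma shear_mult: "shear (A * B) = shear A * shear B"
  unfolding shear_def
  by (simp add: map_poly_mult_hom shear_coeff_0 shear_coeff_add shear_coeff_mult)

lemma shear_pCons: "shear (pCons a H) = shear_coeff a + T2 * shear H"
  unfolding shear_def by (simp add: map_poly_pCons shear_coeff_0)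

lemma shear_one: "shear 1 = 1"
  by (simp add: shear_def map_poly_const shear_coeff_0 shear_coeff_const one_pCons)

lemma shear_power: "shear (A ^ n) = shear A ^ n"
  by (induction n) (simp_all add: shear_one shear_mult)

lemma shear_numeral: "shear (numeral n) = numeral n"
  by (simp add: numeral_poly shear_def map_poly_const shear_coeff_0 shear_coeff_const)

lemma shear_T1: "shear T1 = T1 * T2"
  unfolding T1_def shear_def
  by (simp add: map_poly_const shear_coeff_0 shear_coeff_def map_poly_pCons T1_def)

lemma shear_T2: "shear T2 = T2"
  unfolding T2_def shear_def by (simp add: map_poly_pCons shear_coeff_0 shear_coeff_const one_pCons)

lemmas shear_simps =
  shear_add shear_diff shear_mult shear_power shear_numeral shear_T1 shear_T2 shear_one

lemma coeff_coeff_T2_mult: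
  "coeff (coeff (T2 * Y) m) j = (if m = 0 then 0 else coeff (coeff Y (m - 1)) j)"
  by (cases m) (simp_all add: T2_def)

lemma coeff_coeff_T1_mult:
  "coeff (coeff (T1 * Y) m) j = (if j = 0 then 0 else coeff (coeff Y m) (j - 1))"
  by (cases j) (simp_all add: T1_def)

lemma coeff_coeff_shear_coeff: "coeff (coeff (shear_coeff q) m) j = (if j = m then coeff q j else 0)"
proof (induction q arbitrary: m j)
  case (pCons c q)
  show ?case
    unfolding shear_coeff_pCons mult.assoc
    by (cases m; cases j) (simp_all add: coeff_coeff_T1_mult coeff_coeff_T2_mult pCons.IH)
qed (simp add: shear_coeff_0)

lemma coeff_coeff_shear:
  "coeff (coeff (shear H) m) j = (if j \<le> m then coeff (coeff H (m - j)) j else 0)"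
proof (induction H arbitrary: m j)
  case (pCons a H)
  show ?case
  proof (cases m)
    case (Suc k)
    consider "j = m" | "j < m" | "j > m" by linarith
    then show ?thesis
    proof cases
      case 2
      then have "m - j = Suc (k - j)" using Suc by simp
      then show ?thesis using 2 Suc unfolding shear_pCons coeff_add coeff_coeff_T2_mult
        by (simp add: coeff_coeff_shear_coeff pCons.IH)
    qed (use Suc in \<open>simp_all add: shear_pCons coeff_coeff_T2_mult coeff_coeff_shear_coeff pCons.IH\<close>)
  qed (simp add: shear_pCons coeff_coeff_T2_mult coeff_coeff_shear_coeff)
qed (simp add: shear_def)

lemma shear_eq_0_iff: "shear H = 0 \<longleftrightarrow> H = 0"
proof
  assume "shear H = 0"
  then have "coeff (coeff H k) j = 0" for k j
    using coeff_coeff_shear[of H "j + k" j] by simp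
  then show "H = 0" by (intro poly_eqI) (simp add: poly_eq_iff)
qed (simp add: shear_def)

lemma totdeg_0: "totdeg 0 = 0"
proof -
  have "{j + k | j k. coeff (coeff (0::bipoly) k) j \<noteq> 0} = {}" by simp
  then show ?thesis unfolding totdeg_def by (simp only:) simp
qed

lemma totdeg_eq_degree_shear: "totdeg H = degree (shear H)"
proof -
  define S where "S = {j + k | j k. coeff (coeff H k) j \<noteq> 0}"
  have le: "x \<le> degree (shear H)" if "x \<in> S" for x
  proof -
    obtain j k where x: "x = j + k" and "coeff (coeff H k) j \<noteq> 0"
      using \<open>x \<in> S\<close> S_def by auto
    then have "coeff (coeff (shear H) (j + k)) j \<noteq> 0" by (simp add: coeff_coeff_shear)
    then have "coeff (shear H) (j + k) \<noteq> 0" by auto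
    then show ?thesis using x le_degree by blast
  qed
  show ?thesis
  proof (cases "H = 0")
    case True
    then show ?thesis by (simp add: totdeg_0 shear_def)
  next
    case False
    then have "coeff (shear H) (degree (shear H)) \<noteq> 0" by (simp add: shear_eq_0_iff)
    then obtain j where "coeff (coeff (shear H) (degree (shear H))) j \<noteq> 0"
      by (metis poly_eqI coeff_0)
    then have "j \<le> degree (shear H)" and "coeff (coeff H (degree (shear H) - j)) j \<noteq> 0"
      by (auto simp: coeff_coeff_shear split: if_splits)
    then have "degree (shear H) \<in> S"
      unfolding S_def by (intro CollectI exI[of _ j] exI[of _ "degree (shear H) - j"]) auto
    moreover have "finite S"
      by (rule finite_subset[of _ "{..degree (shear H)}"]) (use le in auto)
    ultimately have "Max (insert 0 S) = degree (shear H)"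
      using le by (intro Max_eqI) auto
    then show ?thesis unfolding totdeg_def S_def .
  qed
qed

subsection \<open>The structure of \<open>F1\<close> along \<open>t2 = 0\<close>\<close>

lemma T2_dvd_iff: "T2 dvd X \<longleftrightarrow> coeff X 0 = 0"
  unfolding T2_def using dvd_iff_poly_eq_0[of 0 X] by (simp add: poly_0_coeff_0)

lemma prime_elem_T2: "prime_elem T2"
  unfolding T2_def by (rule prime_elem_linear_poly) auto

lemma T2_not_unit: "\<not> is_unit T2"
  using prime_elem_T2 prime_elem_def by blast

lemma T2_nonzero: "T2 \<noteq> 0"
  by (simp add: T2_def)

text \<open>A homogeneous \<open>c\<close> restricts to \<open>a t1^D\<close> on \<open>t2 = 0\<close>.\<close>

lemma homogeneous_eval2_1_0_nonzero:
  assumes "homogeneous D c" and "\<not> T2 dvd c"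
  shows "eval2 c 1 0 \<noteq> 0"
proof -
  have "coeff (coeff c 0) n = 0" if "n \<noteq> D" for n
    using assms(1) that unfolding homogeneous_def by force
  then have mono: "coeff c 0 = monom (coeff (coeff c 0) D) D"
    by (intro poly_eqI) (simp add: coeff_monom)
  moreover have "coeff c 0 \<noteq> 0"
    using assms(2) by (simp add: T2_dvd_iff)
  ultimately have "coeff (coeff c 0) D \<noteq> 0"
    by (metis monom_eq_0)
  then show ?thesis
    by (subst eval2_at_0, subst mono) (simp add: poly_monom)
qed

lemma T2_order_div_gcd:
  fixes P Q R :: bipoly
  assumes PR: "P = T2 ^ m * R" and TQ: "T2 ^ Suc m dvd Q" and R0: "eval2 R 1 0 \<noteq> 0"
  shows "T2 dvd Q div gcd P Q" and "eval2 (P div gcd P Q) 1 0 \<noteq> 0"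
proof -
  have "\<not> T2 dvd R"
    using R0 by (auto simp: T2_dvd_iff eval2_at_0 poly_0_coeff_0)
  then have "P \<noteq> 0" using PR T2_nonzero by auto
  define P' where "P' = P div gcd P Q"
  define Q' where "Q' = Q div gcd P Q"
  have cop: "coprime P' Q'"
    unfolding P'_def Q'_def using \<open>P \<noteq> 0\<close> by (intro div_gcd_coprime) auto
  have P: "P = P' * gcd P Q" and Q: "Q = Q' * gcd P Q"
    unfolding P'_def Q'_def by simp_all
  show T2Q: "T2 dvd Q div gcd P Q"
  proof (rule ccontr)
    assume "\<not> T2 dvd Q div gcd P Q"
    then have "coprime (T2 ^ Suc m) Q'"
      unfolding Q'_def using prime_elem_T2 by (simp add: prime_elem_imp_coprime)
    then have "T2 ^ Suc m dvd P"
      using TQ P Q by (metis coprime_dvd_mult_right_iff dvd_mult2 mult.commute)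
    then have "T2 dvd R"
      using PR T2_nonzero by (simp add: mult.commute)
    with \<open>\<not> T2 dvd R\<close> show False ..
  qed
  have "\<not> T2 dvd P'"
    using cop T2Q T2_not_unit coprime_common_divisor unfolding Q'_def by blast
  then have "coprime P' (T2 ^ m)"
    using prime_elem_T2 by (simp add: prime_elem_imp_coprime coprime_commute)
  moreover have "P' dvd T2 ^ m * R"
    using P PR by (metis dvd_triv_left)
  ultimately obtain k where "R = P' * k"
    by (metis coprime_dvd_mult_right_iff dvdE)
  then show "eval2 (P div gcd P Q) 1 0 \<noteq> 0"
    using R0 unfolding P'_def by (simp add: eval2_mult)
qed

lemma F1_T2_structure:
  assumes h1: "homogeneous D c1" and h2: "homogeneous D c2" and cop: "coprime c1 c2"
  shows "T2 dvd snd (F1 (c1, c2))" and "eval2 (fst (F1 (c1, c2))) 1 0 \<noteq> 0"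
proof -
  define P where "P = (T1 * c2^2 - T2 * c1^2)^2"
  define Q where "Q = 4 * T2 * c1 * c2 * (c2 - c1) * (T1 * c2 - T2 * c1)"
  have F1: "F1 (c1, c2) = (P div gcd P Q, Q div gcd P Q)"
    unfolding F1_def Fmap_def P_def Q_def by simp
  have "T2 dvd Q div gcd P Q \<and> eval2 (P div gcd P Q) 1 0 \<noteq> 0"
  proof (cases "T2 dvd c2")
    case False
    have "Q = T2 ^ Suc 0 * (4 * c1 * c2 * (c2 - c1) * (T1 * c2 - T2 * c1))"
      unfolding Q_def by (simp add: mult_ac)
    moreover have "eval2 P 1 0 = eval2 c2 1 0 ^ 4"
      unfolding P_def by (simp add: eval2_simps)
    ultimately show ?thesis
      using T2_order_div_gcd[of P 0 P Q] homogeneous_eval2_1_0_nonzero[OF h2 False] by auto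
  next
    case True
    then obtain e where e: "c2 = T2 * e" by (auto elim: dvdE)
    have "\<not> T2 dvd c1"
      using cop True T2_not_unit coprime_common_divisor by blast
    define R where "R = (T1 * T2 * e^2 - c1^2)^2"
    have "P = T2^2 * R" unfolding P_def R_def e by algebra
    moreover have "T2 ^ Suc 2 dvd Q"
    proof -
      have "Q = T2 ^ 3 * (4 * c1 * e * (T2 * e - c1) * (T1 * e - c1))"
        unfolding Q_def e by algebra
      then show ?thesis by (simp add: numeral_3_eq_3)
    qed
    moreover have "eval2 R 1 0 = eval2 c1 1 0 ^ 4"
      unfolding R_def by (simp add: eval2_simps)
    ultimately show ?thesis
      using T2_order_div_gcd[of P 2 R Q] homogeneous_eval2_1_0_nonzero[OF h1 \<open>\<not> T2 dvd c1\<close>]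
      by auto
  qed
  then show "T2 dvd snd (F1 (c1, c2))" and "eval2 (fst (F1 (c1, c2))) 1 0 \<noteq> 0"
    using F1 by simp_all
qed

subsection \<open>One step of the recursion\<close>

lemma Fstep_T2_mult:
  "Fstep (P, T2 * R) = ((T1*T2*R^2 - P^2)^2, T2 * (4*P*R*(T2*R - P)*(T1*R - P)))"
proof -
  have "Fmap (P, T2 * R) =
      (T2^2 * (T1*T2*R^2 - P^2)^2, T2^2 * (T2 * (4*P*R*(T2*R - P)*(T1*R - P))))"
    unfolding Fmap_def by simp algebra
  then show ?thesis
    unfolding Fstep_def using T2_nonzero by simp
qed

lemma eval2_fst_Fstep_T2_mult_at_0: "eval2 (fst (Fstep (P, T2 * R))) 1 0 = eval2 P 1 0 ^ 4"
  by (simp add: Fstep_T2_mult eval2_simps)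

lemma pnorm_scaled_pair_pow4_le:
  fixes p r t :: complex
  assumes "cmod t \<le> 1"
  shows "pnorm (p, t*r) ^ 4 \<le> max (cmod p ^ 2) (cmod t * cmod r ^ 2) ^ 2"
proof -
  define a b \<tau> where "a = cmod p" and "b = cmod r" and "\<tau> = cmod t"
  define X where "X = \<tau> * b^2"
  have \<tau>0: "\<tau> \<ge> 0" and \<tau>1: "\<tau> \<le> 1" and X0: "X \<ge> 0"
    using assms by (simp_all add: \<tau>_def X_def)
  have "(\<tau> * b) ^ 4 = \<tau>^2 * X^2"
    by (simp add: X_def power_mult_distrib power4_eq_xxxx power2_eq_square)
  also have "\<dots> \<le> X^2"
    using \<tau>0 \<tau>1 by (intro mult_left_le_one_le) (auto simp: power_le_one)
  finally have "max a (\<tau> * b) ^ 4 \<le> max ((a^2)^2) (X^2)"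
    by (cases "a \<le> \<tau> * b") (auto simp: max_def)
  also have "\<dots> \<le> max (a^2) X ^ 2"
    using X0 by (intro max.boundedI power_mono) auto
  finally show ?thesis
    by (simp add: pnorm_def a_def b_def \<tau>_def X_def norm_mult)
qed

lemma Fstep_fst_norm_lower_bound:
  fixes p r t :: complex
  assumes "cmod t \<le> 1"
    and "\<not> (cmod p ^ 2 / 2 < cmod t * cmod r ^ 2 \<and> cmod t * cmod r ^ 2 < 2 * cmod p ^ 2)"
  shows "pnorm (p, t*r) ^ 4 / 4 \<le> cmod ((t*r^2 - p^2)^2)"
proof -
  define A X where "A = cmod p ^ 2" and "X = cmod t * cmod r ^ 2"
  have "X \<ge> 0" by (simp add: X_def)
  have "\<bar>X - A\<bar> \<le> cmod (t*r^2 - p^2)"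
    using norm_triangle_ineq3[of "t*r^2" "p^2"] by (simp add: norm_power X_def A_def norm_mult)
  moreover have "max A X / 2 \<le> \<bar>X - A\<bar>"
    using assms(2) \<open>X \<ge> 0\<close> unfolding A_def[symmetric] X_def[symmetric]
    by (auto simp: max_def abs_if)
  ultimately have "(max A X / 2) ^ 2 \<le> cmod (t*r^2 - p^2) ^ 2"
    using \<open>X \<ge> 0\<close> by (intro power_mono) auto
  then show ?thesis
    using pnorm_scaled_pair_pow4_le[OF assms(1), of p r]
    by (simp add: power_divide norm_power A_def X_def)
qed

lemma comparable_squares_separate:
  fixes a b \<tau> :: real
  assumes "a \<ge> 0" "b \<ge> 0" "0 \<le> \<tau>" "\<tau> \<le> 1/8"
    and "a^2 / 2 < \<tau> * b^2" "\<tau> * b^2 < 2 * a^2"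
  shows "\<tau> * b < a / 2" and "2 * a < b"
proof -
  have "(\<tau> * b)^2 = \<tau> * (\<tau> * b^2)"
    by (simp add: power2_eq_square)
  also have "\<dots> \<le> 1/8 * (\<tau> * b^2)"
    using assms(2-4) by (intro mult_right_mono) auto
  finally have "(\<tau> * b)^2 < (a/2)^2"
    using assms(6) by (simp add: power_divide)
  then show "\<tau> * b < a / 2"
    by (rule power_less_imp_less_base) (use assms(1) in simp)
  have "\<tau> * b^2 \<le> 1/8 * b^2"
    using assms(4) by (rule mult_right_mono) simp
  then have "(2*a)^2 < b^2"
    using assms(5) by (simp add: power2_eq_square)
  then show "2 * a < b"
    by (rule power_less_imp_less_base) (use assms(2) in simp)
qed

lemma Fstep_snd_norm_lower_bound:
  fixes p r t :: complex
  assumes "cmod t \<le> 1/8"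
    and near: "cmod p ^ 2 / 2 < cmod t * cmod r ^ 2" "cmod t * cmod r ^ 2 < 2 * cmod p ^ 2"
  shows "pnorm (p, t*r) ^ 4 / 4 \<le> cmod (t * (4*p*r*(t*r - p)*(r - p)))"
proof -
  define a b \<tau> where "a = cmod p" and "b = cmod r" and "\<tau> = cmod t"
  have a0: "a \<ge> 0" and b0: "b \<ge> 0" and \<tau>0: "\<tau> \<ge> 0"
    by (simp_all add: a_def b_def \<tau>_def)
  note near = near[folded a_def b_def \<tau>_def]
  note sep = comparable_squares_separate[OF a0 b0 \<tau>0 assms(1)[folded \<tau>_def] near]
  have tr: "a/2 \<le> cmod (t*r - p)"
    using norm_triangle_ineq3[of "t*r" p] sep(1) by (simp add: a_def b_def \<tau>_def norm_mult)
  have r: "b/2 \<le> cmod (r - p)"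
    using norm_triangle_ineq3[of r p] sep(2) by (simp add: a_def b_def)
  have "pnorm (p, t*r) = max a (\<tau> * b)"
    by (simp add: pnorm_def a_def b_def \<tau>_def norm_mult)
  also have "\<dots> = a"
    by (rule max_absorb1) (use sep(1) mult_nonneg_nonneg[OF \<tau>0 b0] in linarith)
  finally have "pnorm (p, t*r) ^ 4 / 4 \<le> a^2 * (a^2 / 2)"
    using a0 by (simp add: power4_eq_xxxx power2_eq_square)
  also have "\<dots> \<le> a^2 * (\<tau> * b^2)"
    using near by (intro mult_left_mono) auto
  also have "\<dots> = 4 * \<tau> * a * b * (a/2) * (b/2)"
    by (simp add: power2_eq_square)
  also have "\<dots> \<le> 4 * \<tau> * a * b * cmod (t*r - p) * cmod (r - p)"
    using tr r a0 b0 \<tau>0 by (intro mult_mono) auto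
  also have "\<dots> = cmod (t * (4*p*r*(t*r - p)*(r - p)))"
    by (simp add: norm_mult a_def b_def \<tau>_def)
  finally show ?thesis .
qed

text \<open>Either \<open>|t r^2|\<close> and \<open>|p^2|\<close> differ by a factor \<open>2\<close>, and the first coordinate is large; or they
  are comparable, which for small \<open>t\<close> forces \<open>|r| \<gg> |p| \<gg> |t r|\<close>, and the second one is large.\<close>

lemma quartic_step_norm_bound:
  fixes p r t :: complex
  assumes "cmod t \<le> 1/8"
  shows "pnorm (p, t*r) ^ 4 / 4 \<le> pnorm ((t*r^2 - p^2)^2, t * (4*p*r*(t*r - p)*(r - p)))"
  using Fstep_fst_norm_lower_bound[of t p r] Fstep_snd_norm_lower_bound[OF assms, of p r] assms
  by (cases "cmod p ^ 2 / 2 < cmod t * cmod r ^ 2 \<and> cmod t * cmod r ^ 2 < 2 * cmod p ^ 2")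
    (auto simp: pnorm_def le_max_iff_disj)

lemma pnorm_Fstep_T2_mult_growth:
  assumes "cmod t \<le> 1/8"
  shows "pnorm (evalpair (P, T2 * R) 1 t) ^ 4 / 4 \<le> pnorm (evalpair (Fstep (P, T2 * R)) 1 t)"
  using quartic_step_norm_bound[OF assms, of "eval2 P 1 t" "eval2 R 1 t"]
  by (simp add: evalpair_def Fstep_T2_mult eval2_simps)

text \<open>The leading terms of \<open>t1 q^2\<close> and \<open>\<pi>^2\<close> cannot cancel because \<open>t1\<close> is not a square.\<close>

lemma x_mult_square_neq_square:
  fixes \<alpha> \<beta> :: "complex poly"
  assumes "\<alpha> \<noteq> 0" "\<beta> \<noteq> 0"
  shows "[:0, 1:] * \<beta>^2 \<noteq> \<alpha>^2"
proof
  assume eq: "[:0, 1:] * \<beta>^2 = \<alpha>^2"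
  have "degree ([:0, 1:] * \<beta>^2) = 1 + 2 * degree \<beta>"
    using assms by (subst degree_mult_eq) (auto simp: degree_power_eq)
  moreover have "degree (\<alpha>^2) = 2 * degree \<alpha>"
    using assms by (simp add: degree_power_eq)
  ultimately have "1 + 2 * degree \<beta> = 2 * degree \<alpha>"
    using eq by metis
  then show False
    by presburger
qed

lemma degree_T1_mult_square_diff_square:
  fixes q \<pi> :: bipoly
  assumes "\<pi> \<noteq> 0"
  shows "degree (T1 * q^2 - \<pi>^2) = 2 * max (degree q) (degree \<pi>)"
proof -
  have dq: "degree (T1 * q^2) = 2 * degree q"
    by (cases "q = 0") (simp_all add: T1_def degree_power_eq)
  have d\<pi>: "degree (\<pi>^2) = 2 * degree \<pi>"
    using assms by (simp add: degree_power_eq)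
  consider "degree q \<noteq> degree \<pi>" | "degree q = degree \<pi>" "q \<noteq> 0" | "q = 0"
    by blast
  then show ?thesis
  proof cases
    case 1
    then show ?thesis
      using dq d\<pi> degree_add_eq_left[of "- (\<pi>^2)" "T1 * q^2"]
        degree_add_eq_right[of "T1 * q^2" "- (\<pi>^2)"]
      by (cases "degree q < degree \<pi>") auto
  next
    case 2
    have lead2: "coeff (p^2) (2 * degree p) = lead_coeff p ^ 2" if "p \<noteq> 0" for p :: bipoly
      using lead_coeff_power[of p 2] degree_power_eq[OF that, of 2] by simp
    have "coeff (q^2) (2 * degree \<pi>) = lead_coeff q ^ 2"
      using lead2[OF \<open>q \<noteq> 0\<close>] by (simp only: 2(1))
    then have "coeff (T1 * q^2 - \<pi>^2) (2 * degree \<pi>) = [:0, 1:] * lead_coeff q ^ 2 - lead_coeff \<pi> ^ 2"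
      using lead2[OF assms] by (simp add: T1_def)
    also have "\<dots> \<noteq> 0"
      using x_mult_square_neq_square[of "lead_coeff \<pi>" "lead_coeff q"] \<open>q \<noteq> 0\<close> assms
      by (simp only: leading_coeff_0_iff) simp
    finally have "2 * degree \<pi> \<le> degree (T1 * q^2 - \<pi>^2)"
      by (rule le_degree)
    moreover have "degree (T1 * q^2 - \<pi>^2) \<le> 2 * degree \<pi>"
      using dq d\<pi> 2 by (intro degree_diff_le) auto
    ultimately show ?thesis
      using 2 by simp
  qed (use d\<pi> in simp)
qed

lemma pdeg_Fstep_T2_mult:
  assumes "P \<noteq> 0"
  shows "pdeg (Fstep (P, T2 * R)) = 4 * pdeg (P, T2 * R)"
proof -
  define \<pi> q where "\<pi> = shear P" and "q = shear (T2 * R)"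
  define M where "M = max (degree q) (degree \<pi>)"
  have "\<pi> \<noteq> 0"
    using assms by (simp add: \<pi>_def shear_eq_0_iff)
  have pdeg_eq: "pdeg F = max (degree (shear (fst F))) (degree (shear (snd F)))" for F
    by (simp add: pdeg_def totdeg_eq_degree_shear)
  have "shear (fst (Fstep (P, T2 * R))) = (T1 * q^2 - \<pi>^2)^2"
    unfolding Fstep_T2_mult \<pi>_def q_def by (simp add: shear_simps) algebra
  moreover have "degree ((T1 * q^2 - \<pi>^2)^2) = 2 * degree (T1 * q^2 - \<pi>^2)"
    by (cases "T1 * q^2 - \<pi>^2 = 0") (simp_all add: degree_power_eq)
  ultimately have "degree (shear (fst (Fstep (P, T2 * R)))) = 4 * M"
    using degree_T1_mult_square_diff_square[OF \<open>\<pi> \<noteq> 0\<close>, of q] by (simp add: M_def)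
  moreover have "degree (shear (snd (Fstep (P, T2 * R)))) \<le> 4 * M"
  proof -
    have snd_eq: "shear (snd (Fstep (P, T2 * R))) = 4 * \<pi> * q * (q - \<pi>) * (T1 * q - \<pi>)"
      unfolding Fstep_T2_mult \<pi>_def q_def by (simp add: shear_simps)
    have "degree (T1 * q) \<le> degree q"
      by (simp add: T1_def degree_smult_le)
    then have "degree (q - \<pi>) \<le> M" "degree (T1 * q - \<pi>) \<le> M"
      unfolding M_def by (auto intro: degree_diff_le)
    moreover have "degree \<pi> \<le> M" "degree q \<le> M"
      by (simp_all add: M_def)
    moreover have "degree (4 * \<pi> * q * (q - \<pi>) * (T1 * q - \<pi>))
        \<le> degree (4 :: bipoly) + degree \<pi> + degree q + degree (q - \<pi>) + degree (T1 * q - \<pi>)"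
      by (meson add_le_mono degree_mult_le le_refl order_trans)
    moreover have "degree (4 :: bipoly) = 0"
      by (simp add: numeral_poly)
    ultimately show ?thesis
      unfolding snd_eq by linarith
  qed
  ultimately show ?thesis
    unfolding pdeg_eq[of "Fstep _"] pdeg_eq[of "(P, T2 * R)"] M_def \<pi>_def q_def by simp
qed

lemma Fseq_Suc_0: "Fseq C (Suc 0) = F1 C"
  by (simp add: Fseq_def)

lemma Fseq_Suc_Suc: "Fseq C (Suc (Suc k)) = Fstep (Fseq C (Suc k))"
  by (simp add: Fseq_def)

lemma T2_dvd_snd_Fseq:
  assumes "T2 dvd snd (F1 C)"
  shows "T2 dvd snd (Fseq C (Suc k))"
proof (induction k)
  case (Suc k)
  then obtain R where "Fseq C (Suc k) = (fst (Fseq C (Suc k)), T2 * R)"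
    by (metis dvdE prod.collapse)
  then show ?case
    by (metis Fseq_Suc_Suc Fstep_T2_mult dvd_triv_left snd_conv)
qed (use assms in \<open>simp add: Fseq_Suc_0\<close>)

lemma Fseq_T2_mult_form:
  assumes "T2 dvd snd (F1 C)"
  obtains P R where "Fseq C (Suc k) = (P, T2 * R)"
  using T2_dvd_snd_Fseq[OF assms, of k] by (metis dvdE prod.collapse)

lemma eval2_fst_Fseq_at_0:
  assumes "T2 dvd snd (F1 C)"
  shows "eval2 (fst (Fseq C (Suc k))) 1 0 = eval2 (fst (F1 C)) 1 0 ^ 4 ^ k"
proof (induction k)
  case (Suc k)
  obtain P R where F: "Fseq C (Suc k) = (P, T2 * R)"
    using Fseq_T2_mult_form[OF assms] .
  show ?case
    using Suc F by (simp add: Fseq_Suc_Suc eval2_fst_Fstep_T2_mult_at_0 power_mult[symmetric] ac_simps)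
qed (simp add: Fseq_Suc_0)

lemma pdeg_Fseq:
  assumes "T2 dvd snd (F1 C)" and "eval2 (fst (F1 C)) 1 0 \<noteq> 0"
  shows "pdeg (Fseq C (Suc k)) = 4 ^ k * pdeg (F1 C)"
proof (induction k)
  case (Suc k)
  obtain P R where F: "Fseq C (Suc k) = (P, T2 * R)"
    using Fseq_T2_mult_form[OF assms(1)] .
  have "eval2 P 1 0 \<noteq> 0"
    using eval2_fst_Fseq_at_0[OF assms(1), of k] assms(2) F by simp
  then have "P \<noteq> 0"
    by (auto simp: eval2_def)
  then show ?case
    using Suc F by (simp add: Fseq_Suc_Suc pdeg_Fstep_T2_mult)
qed (simp add: Fseq_Suc_0)

lemma pnorm_Fseq_growth:
  assumes "T2 dvd snd (F1 C)" and "cmod t \<le> 1/8"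
  shows "pnorm (evalpair (Fseq C (Suc k)) 1 t) ^ 4 / 4 \<le> pnorm (evalpair (Fseq C (Suc (Suc k))) 1 t)"
proof -
  obtain P R where "Fseq C (Suc k) = (P, T2 * R)"
    using Fseq_T2_mult_form[OF assms(1)] .
  then show ?thesis
    using pnorm_Fstep_T2_mult_growth[OF assms(2)] by (simp add: Fseq_Suc_Suc)
qed

subsection \<open>Escape rate\<close>

lemma ln_quartic_step:
  fixes x y :: real
  assumes "x > 0" and "x ^ 4 / 4 \<le> y"
  shows "y > 0" and "ln x / 4 ^ k - ln 4 / 4 ^ Suc k \<le> ln y / 4 ^ Suc k"
proof -
  have "x ^ 4 / 4 > 0" using assms(1) by simp
  then show ypos: "y > 0" using assms(2) by linarith
  have "ln (x ^ 4 / 4) \<le> ln y"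
    using \<open>x ^ 4 / 4 > 0\<close> ypos assms(2) by (subst ln_le_cancel_iff) auto
  have "4 * ln x - ln 4 = ln (x ^ 4 / 4)"
    using assms(1) by (simp add: ln_div ln_realpow)
  also note \<open>ln (x ^ 4 / 4) \<le> ln y\<close>
  finally have "(4 * ln x - ln 4) / 4 ^ Suc k \<le> ln y / 4 ^ Suc k"
    by (simp add: divide_right_mono)
  moreover have "(4 * ln x - ln 4) / 4 ^ Suc k = ln x / 4 ^ k - ln 4 / 4 ^ Suc k"
    by (simp add: field_simps)
  ultimately show "ln x / 4 ^ k - ln 4 / 4 ^ Suc k \<le> ln y / 4 ^ Suc k"
    by simp
qed

lemma ln_quartic_iterate_lower_bound:
  fixes m :: "nat \<Rightarrow> real"
  assumes growth: "\<And>k. m k ^ 4 / 4 \<le> m (Suc k)" and pos: "m K > 0"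
  shows "ln (m K) / 4 ^ K - ln 4 / 4 ^ K \<le> ln (m (K + j)) / 4 ^ (K + j)"
proof -
  have "m (K + j) > 0 \<and>
      ln (m K) / 4 ^ K - ln 4 / 4 ^ K + ln 4 / 4 ^ (K + j) \<le> ln (m (K + j)) / 4 ^ (K + j)"
  proof (induction j)
    case (Suc j)
    then have "m (K + j) > 0" by simp
    note step = ln_quartic_step(1)[OF this growth] ln_quartic_step(2)[OF this growth, of "K + j"]
    have "ln 4 / 4 ^ Suc (K + j) \<le> ln 4 / 4 ^ (K + j) - ln (4::real) / 4 ^ Suc (K + j)"
      by (simp add: field_simps)
    then show ?case
      unfolding add_Suc_right using Suc step by (intro conjI) linarith+
  qed (use pos in simp)
  moreover have "ln 4 / 4 ^ (K + j) \<ge> (0::real)"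
    by simp
  ultimately show ?thesis
    by linarith
qed

lemma isCont_ln_norm_lower_bound:
  fixes h :: "'a::real_normed_vector \<Rightarrow> 'b::real_normed_vector"
  assumes "isCont h x" and "h x \<noteq> 0" and "e > 0"
  shows "\<exists>\<delta>>0. \<forall>y. norm (y - x) < \<delta> \<longrightarrow> h y \<noteq> 0 \<and> ln (norm (h x)) - e < ln (norm (h y))"
proof -
  have "isCont (\<lambda>y. ln (norm (h y))) x"
    using assms(1,2) by (intro continuous_intros) auto
  then have "((\<lambda>y. ln (norm (h y))) \<longlongrightarrow> ln (norm (h x))) (nhds x)"
    and "(h \<longlongrightarrow> h x) (nhds x)"
    using assms(1) by (simp_all add: tendsto_nhds_iff isCont_def)
  then have "\<forall>\<^sub>F y in nhds x. h y \<noteq> 0 \<and> ln (norm (h x)) - e < ln (norm (h y))"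
    using assms(2,3) by (intro eventually_conj order_tendstoD tendsto_imp_eventually_ne) auto
  then show ?thesis
    by (auto simp: eventually_nhds_metric dist_norm)
qed

text \<open>Fix \<open>K\<close> with \<open>ln 4 / 4^K\<close> small; then only the continuity of \<open>f K\<close> at \<open>0\<close> is needed.\<close>

lemma escape_rate_lower_bound:
  fixes M :: "nat \<Rightarrow> 'a::real_normed_vector \<Rightarrow> real" and f :: "nat \<Rightarrow> 'a \<Rightarrow> complex"
  assumes "r > 0"
    and growth: "\<And>k t. norm t \<le> r \<Longrightarrow> M k t ^ 4 / 4 \<le> M (Suc k) t"
    and dominated: "\<And>k t. cmod (f k t) \<le> M k t"
    and cont: "\<And>k. isCont (f k) 0"
    and at_0: "\<And>k. f k 0 = a ^ 4 ^ k" and "a \<noteq> 0" and "\<epsilon> > 0"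
  shows "\<exists>\<delta>>0. \<exists>N. \<forall>t n. norm t < \<delta> \<and> N \<le> n \<longrightarrow> ln (cmod a) - \<epsilon> < ln (M n t) / 4 ^ n"
proof -
  have "(\<lambda>k. ln 4 / 4 ^ k :: real) \<longlonglongrightarrow> 0"
    by (rule LIMSEQ_divide_realpow_zero) simp
  from order_tendstoD(2)[OF this, of "\<epsilon> / 2"] \<open>\<epsilon> > 0\<close>
  obtain K where K: "ln 4 / 4 ^ K < \<epsilon> / 2"
    by (auto simp: eventually_sequentially)
  have "f K 0 \<noteq> 0" and ln_fK0: "ln (cmod (f K 0)) = 4 ^ K * ln (cmod a)"
    using \<open>a \<noteq> 0\<close> by (simp_all add: at_0 norm_power ln_realpow)
  obtain \<delta> where "\<delta> > 0" and near: "\<And>t. norm t < \<delta> \<Longrightarrow>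
      f K t \<noteq> 0 \<and> ln (cmod (f K 0)) - 4 ^ K * (\<epsilon> / 2) < ln (cmod (f K t))"
    using isCont_ln_norm_lower_bound[OF cont \<open>f K 0 \<noteq> 0\<close>, of "4 ^ K * (\<epsilon> / 2)"] \<open>\<epsilon> > 0\<close>
    by auto
  show ?thesis
  proof (intro exI[of _ "min \<delta> r"] exI[of _ K] conjI allI impI)
    show "min \<delta> r > 0"
      using \<open>\<delta> > 0\<close> \<open>r > 0\<close> by simp
    fix t :: 'a and n :: nat
    assume tn: "norm t < min \<delta> r \<and> K \<le> n"
    then obtain j where n: "n = K + j"
      using le_Suc_ex by blast
    from tn have "norm t < r" by simp
    from tn near have "f K t \<noteq> 0"
      and lower: "ln (cmod (f K 0)) - 4 ^ K * (\<epsilon> / 2) < ln (cmod (f K t))"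
      by simp_all
    have "M K t > 0"
      using dominated[of K t] \<open>f K t \<noteq> 0\<close> by (meson order_less_le_trans zero_less_norm_iff)
    have ln_le: "ln (cmod (f K t)) \<le> ln (M K t)"
      using dominated[of K t] \<open>f K t \<noteq> 0\<close> \<open>M K t > 0\<close> by (subst ln_le_cancel_iff) auto
    have "(ln (cmod a) - \<epsilon> / 2) * 4 ^ K < ln (cmod (f K t))"
      using lower unfolding ln_fK0 by (simp add: algebra_simps)
    then have "ln (cmod a) - \<epsilon> / 2 < ln (cmod (f K t)) / 4 ^ K"
      by (simp add: pos_less_divide_eq)
    also have "\<dots> \<le> ln (M K t) / 4 ^ K"
      using ln_le by (simp add: divide_right_mono)
    also have "\<dots> \<le> ln (M n t) / 4 ^ n + ln 4 / 4 ^ K"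
      using ln_quartic_iterate_lower_bound[of "\<lambda>k. M k t" K j] growth \<open>norm t < r\<close> \<open>M K t > 0\<close> n
      by fastforce
    finally show "ln (cmod a) - \<epsilon> < ln (M n t) / 4 ^ n"
      using K by linarith
  qed
qed

lemma Fseq_0: "Fseq C 0 = F1 C"
  by (simp add: Fseq_def)

lemma Fseq_escape_rate:
  assumes dvd: "T2 dvd snd (F1 C)" and p0: "eval2 (fst (F1 C)) 1 0 \<noteq> 0" and "\<epsilon> > 0"
  shows "\<exists>\<delta>>0. \<exists>N>0. \<forall>(t::complex) (n::nat). cmod t < \<delta> \<and> n \<ge> N \<longrightarrow>
    ln (pnorm (evalpair (Fseq C n) 1 t)) / real (pdeg (Fseq C n))
    - ln (cmod (eval2 (fst (F1 C)) 1 0)) / real (pdeg (F1 C)) > - \<epsilon>"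
proof -
  define p0 d where "p0 = eval2 (fst (F1 C)) 1 0" and "d = pdeg (F1 C)"
  define M where "M k t = pnorm (evalpair (Fseq C (Suc k)) 1 t)" for k t
  have deg: "pdeg (Fseq C (Suc k)) = 4 ^ k * d" for k
    using pdeg_Fseq[OF dvd p0] by (simp add: d_def)
  show ?thesis
  proof (cases "d = 0")
    case True
    text \<open>Then every quotient in the claim is \<open>0\<close>, by the convention \<open>x / 0 = 0\<close>.\<close>
    then have "pdeg (Fseq C n) = 0" for n
      using deg by (cases n) (simp_all add: Fseq_0 d_def)
    then show ?thesis
      using \<open>\<epsilon> > 0\<close> True by (intro exI[of _ "1::real"] exI[of _ "1::nat"] conjI) (simp_all add: d_def)
  next
    case False
    obtain \<delta> N where "\<delta> > 0"
      and near: "\<And>t n. cmod t < \<delta> \<and> N \<le> n \<Longrightarrow> ln (cmod p0) - \<epsilon> * d < ln (M n t) / 4 ^ n"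
      using escape_rate_lower_bound[of "1/8" M "\<lambda>k t. eval2 (fst (Fseq C (Suc k))) 1 t" p0 "\<epsilon> * d"]
        pnorm_Fseq_growth[OF dvd] eval2_fst_Fseq_at_0[OF dvd] isCont_eval2 p0 \<open>\<epsilon> > 0\<close> False
      by (auto simp: M_def pnorm_def evalpair_def p0_def)
    show ?thesis
    proof (intro exI[of _ \<delta>] exI[of _ "Suc N"] conjI allI impI \<open>\<delta> > 0\<close> zero_less_Suc)
      fix t :: complex and n :: nat
      assume tn: "cmod t < \<delta> \<and> Suc N \<le> n"
      then obtain k where n: "n = Suc k" and "N \<le> k"
        by (cases n) auto
      then have "ln (cmod p0) - \<epsilon> * d < ln (M k t) / 4 ^ k"
        using near tn by blast
      then show "ln (pnorm (evalpair (Fseq C n) 1 t)) / real (pdeg (Fseq C n))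
          - ln (cmod (eval2 (fst (F1 C)) 1 0)) / real (pdeg (F1 C)) > - \<epsilon>"
        using False unfolding n deg M_def[symmetric] p0_def[symmetric] d_def[symmetric]
        by (simp add: field_simps)
    qed
  qed
qed

theorem lemma4p5:
  fixes c1 c2 :: bipoly and D :: nat
  assumes "homogeneous D c1" and "homogeneous D c2"
    and "coprime c1 c2" and "c2 \<noteq> 0"
    and "Fract (dehom c1) (dehom c2) \<noteq> 0"
    and "Fract (dehom c1) (dehom c2) \<noteq> 1"
    and "Fract (dehom c1) (dehom c2) \<noteq> Fract [:0, 1:] 1"
  shows "\<exists>\<epsilon>0>0. \<forall>\<epsilon>. 0 < \<epsilon> \<and> \<epsilon> < \<epsilon>0 \<longrightarrow>
    (\<exists>\<delta>>0. \<exists>N>0. \<forall>(t::complex) (n::nat). cmod t < \<delta> \<and> n \<ge> N \<longrightarrow>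
       ln (pnorm (evalpair (Fseq (c1, c2) n) 1 t)) / real (pdeg (Fseq (c1, c2) n))
       - ln (cmod (eval2 (fst (F1 (c1, c2))) 1 0)) / real (pdeg (F1 (c1, c2))) > - \<epsilon>)"
  using Fseq_escape_rate[OF F1_T2_structure[OF assms(1-3)]] by (intro exI[of _ 1]) auto

end
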